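(* For any finite alphabet $\mathfrak{G}$, the hook series of $(\mathbf{S}_\bullet(\mathfrak{G}), \mathbf{V})$ satisfies $\langle\mathfrak{t},\mathbf{H}_\mathbf{V}\rangle = \tilde{h}(\mathfrak{t})$ for any $\mathfrak{G}$-tree $\mathfrak{t}$.
   Context: $\mathfrak{G}$ is a finite alphabet (letters with arities $\geq 1$). A $\mathfrak{G}$-tree is either the leaf (the tree with no internal node) or $\mathtt{a}[\mathfrak{s}_1,\dots,\mathfrak{s}_{|\mathtt{a}|}]$, a root decorated by $\mathtt{a}\in\mathfrak{G}$ with children $\mathfrak{s}_1,\dots,\mathfrak{s}_{|\mathtt{a}|}$; $\deg$ counts internal nodes. $\mathbf{S}_\bullet(\mathfrak{G})$ is the set of $\mathfrak{G}$-trees graded by degree. $\mathbf{V}$ is the adjoint (trees being orthonormal) of the linear map $\mathbf{V}^\star$ defined by: $\mathbf{V}^\star$ of the leaf is $0$; $\mathbf{V}^\star(\mathtt{a}[\mathfrak{s},\text{leaf},\dots,\text{leaf}]) = \mathfrak{s}$; and $\mathbf{V}^\star(\mathtt{a}[\mathfrak{s}_1,\dots,\mathfrak{s}_{|\mathtt{a}|}]) = \sum_{j\in[2,|\mathtt{a}|]}\mathtt{a}[\mathfrak{s}_1,\dots,\mathfrak{s}_{j-1},\mathbf{V}^\star(\mathfrak{s}_j),\mathfrak{s}_{j+1},\dots,\mathfrak{s}_{|\mathtt{a}|}]$ when some $\mathfrak{s}_j$, $j\geq 2$, is not the leaf. This graded graph has the leaf as root, and its hook series $\mathbf{H}_\mathbf{V}$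 is defined by $\langle x,\mathbf{H}_\mathbf{V}\rangle = [x=\text{the leaf}] + \langle\mathbf{V}^\star(x),\mathbf{H}_\mathbf{V}\rangle$ (equivalently, the number of paths from the leaf to $x$). The statistic $\tilde{h}$ is defined by $\tilde{h}(\text{leaf}) = 1$ and $\tilde{h}(\mathtt{a}[\mathfrak{s}_1,\dots,\mathfrak{s}_{|\mathtt{a}|}]) = \frac{(\deg(\mathfrak{s}_2)+\cdots+\deg(\mathfrak{s}_{|\mathtt{a}|}))!}{\deg(\mathfrak{s}_2)!\cdots\deg(\mathfrak{s}_{|\mathtt{a}|})!}\prod_{i\in[|\mathtt{a}|]}\tilde{h}(\mathfrak{s}_i)$; it equals the number of linear extensions of the twisted poset on the internal nodes of $\mathfrak{t}$ in which $u\leq' v$ iff $u=v$, or $v$ is a descendant of $u$ not lying in the first subtree of $u$, or $u$ lies in the first subtree of $v$. *)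

theory Defs
  imports Main "HOL-Library.Multiset"
begin

datatype 'g tree = Leaf | Node 'g "'g tree list"

fun wf_tree :: "'g set \<Rightarrow> ('g \<Rightarrow> nat) \<Rightarrow> 'g tree \<Rightarrow> bool" where
  "wf_tree G ar Leaf = True"
| "wf_tree G ar (Node a ts) = (a \<in> G \<and> length ts = ar a \<and> (\<forall>t\<in>set ts. wf_tree G ar t))"

fun deg :: "'g tree \<Rightarrow> nat" where
  "deg Leaf = 0"
| "deg (Node a ts) = Suc (sum_list (map deg ts))"

lemma size_nth_less_Node: "j < length ts \<Longrightarrow> size (ts ! j) < Suc (size_list size ts)"
  by (meson less_Suc_eq_le nth_mem size_list_estimation' order_refl)

text \<open>The linear map V-star, with values in nonnegative integer combinations of trees (multisets).
  Positions are 0-based: position 0 is the first subtree.\<close>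
function Vstar :: "'g tree \<Rightarrow> 'g tree multiset" where
  "Vstar Leaf = {#}"
| "Vstar (Node a ts) =
     (if ts \<noteq> [] \<and> (\<forall>t\<in>set (tl ts). t = Leaf) then {# hd ts #}
      else sum_list (map (\<lambda>j. image_mset (\<lambda>u. Node a (ts[j := u])) (Vstar (ts ! j)))
                         [1..<length ts]))"
  by pat_completeness auto
termination
  by (relation "measure size") (auto simp: size_nth_less_Node)

text \<open>Hook series coefficient: number of paths from the leaf, given by the recurrence
  h(x) = [x = leaf] + <V*(x), H>, which is well-founded since V* lowers degree by one;
  unfolded here with degree as fuel.\<close>
fun hook_fuel :: "nat \<Rightarrow> 'g tree \<Rightarrow> nat" where
  "hook_fuel 0 x = (if x = Leaf then 1 else 0)"
| "hook_fuel (Suc n) x = (if x = Leaf then 1 else 0) + sum_mset (image_mset (hook_fuel n) (Vstar x))"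

definition hook :: "'g tree \<Rightarrow> nat" where
  "hook x = hook_fuel (deg x) x"

fun htilde :: "'g tree \<Rightarrow> nat" where
  "htilde Leaf = 1"
| "htilde (Node a ts) =
     (fact (sum_list (map deg (tl ts))) div prod_list (map (\<lambda>s. fact (deg s)) (tl ts)))
     * prod_list (map htilde ts)"

end

theory Submission
  imports Defs
begin

text \<open>Walking down a path from t = a[s, ts] to the leaf, V* first strips the internal nodes of the
  subtrees in ts one at a time, in an arbitrary interleaving, and only then removes the root,
  after which it continues along a path of s. Hence the paths to t are the paths to s combined
  with an interleaving of paths to the trees of ts, and their number is the multinomial
  coefficient of the degrees of ts times hook s times the hooks of ts. Formally this is an
  induction on the total degree of ts using the recurrence of the hook series.\<close>

lemma deg_eq_0_iff: "deg t = 0 \<longleftrightarrow> t = Leaf"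
  by (cases t) auto

lemma sum_deg_eq_0_iff: "(\<Sum>t\<leftarrow>ts. deg t) = 0 \<longleftrightarrow> (\<forall>t\<in>set ts. t = Leaf)"
  by (simp add: deg_eq_0_iff)

lemma sum_list_update_add:
  fixes xs :: "'a::comm_monoid_add list"
  assumes "i < length xs"
  shows "sum_list (xs[i := x]) + xs ! i = sum_list xs + x"
  using assms arg_cong[OF id_take_nth_drop[OF assms], of sum_list]
  by (simp add: upd_conv_take_nth_drop ac_simps)

lemma prod_list_update:
  fixes xs :: "'a::comm_monoid_mult list"
  assumes "i < length xs"
  shows "prod_list (xs[i := x]) = prod_list (take i xs) * x * prod_list (drop (Suc i) xs)"
  using assms by (simp add: upd_conv_take_nth_drop mult.assoc)

lemma sum_mset_prod_list_update:
  fixes xs :: "'a::comm_semiring_1 list"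
  assumes "i < length xs"
  shows "(\<Sum>u\<in>#M. prod_list (xs[i := f u])) = prod_list (xs[i := \<Sum>u\<in>#M. f u])"
  using assms by (simp add: prod_list_update sum_mset_distrib_left sum_mset_distrib_right)

lemma sum_mset_image_sum_list: "(\<Sum>x\<in>#sum_list Ms. f x) = (\<Sum>M\<leftarrow>Ms. \<Sum>x\<in>#M. f x)"
  by (induction Ms) auto

lemma prod_fact_dvd_fact_sum_list: "(\<Prod>n\<leftarrow>ns. fact n) dvd (fact (sum_list ns) :: nat)"
proof (induction ns)
  case (Cons n ns)
  then have "(\<Prod>m\<leftarrow>n # ns. fact m) dvd fact n * (fact (sum_list ns) :: nat)"
    by simp
  also have "\<dots> dvd fact (sum_list (n # ns))"
    using fact_fact_dvd_fact by simp
  finally show ?case .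
qed simp

declare Vstar.simps(2) [simp del]

lemma Vstar_Node_Cons_Leaves:
  assumes "\<forall>t\<in>set ts. t = Leaf"
  shows "Vstar (Node a (s # ts)) = {#s#}"
  using assms by (subst Vstar.simps(2)) simp

lemma Vstar_Node_Cons:
  assumes "\<exists>t\<in>set ts. t \<noteq> Leaf"
  shows "Vstar (Node a (s # ts)) =
    (\<Sum>i\<leftarrow>[0..<length ts]. image_mset (\<lambda>u. Node a (s # ts[i := u])) (Vstar (ts ! i)))"
proof -
  have "Vstar (Node a (s # ts)) = (\<Sum>j\<leftarrow>[1..<length (s # ts)].
      image_mset (\<lambda>u. Node a ((s # ts)[j := u])) (Vstar ((s # ts) ! j)))"
    using assms by (subst Vstar.simps(2)) auto
  also have "[1..<length (s # ts)] = map Suc [0..<length ts]"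
    by (simp add: map_Suc_upt del: upt_Suc)
  finally show ?thesis
    by (simp add: comp_def del: upt_Suc)
qed

lemma deg_Vstar: "u \<in># Vstar x \<Longrightarrow> deg x = Suc (deg u)"
proof (induction x arbitrary: u rule: Vstar.induct)
  case (2 a ts)
  note u_mem = "2.prems"[unfolded Vstar.simps(2)]
  show ?case
  proof (cases "ts \<noteq> [] \<and> (\<forall>t\<in>set (tl ts). t = Leaf)")
    case True
    then obtain s rest where "ts = s # rest" and "\<forall>t\<in>set rest. t = Leaf"
      by (cases ts) auto
    with u_mem show ?thesis
      by (simp add: deg_eq_0_iff)
  next
    case False
    with u_mem obtain j v where j: "j \<in> set [1..<length ts]" and v: "v \<in># Vstar (ts ! j)"
      and u: "u = Node a (ts[j := v])"
      by auto
    have "deg (ts ! j) = Suc (deg v)"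
      using "2.IH"[OF False j v] .
    with j u sum_list_update_add[of j "map deg ts" "deg v"] show ?thesis
      by (simp add: map_update)
  qed
qed simp

lemma hook_Leaf [simp]: "hook Leaf = 1"
  by (simp add: hook_def)

lemma hook_Vstar:
  assumes "x \<noteq> Leaf"
  shows "hook x = (\<Sum>u\<in>#Vstar x. hook u)"
proof -
  obtain n where n: "deg x = Suc n"
    using assms by (cases x) auto
  with assms have "hook x = (\<Sum>u\<in>#Vstar x. hook_fuel n u)"
    by (simp add: hook_def)
  also have "\<dots> = (\<Sum>u\<in>#Vstar x. hook u)"
  proof (intro arg_cong[where f = sum_mset] image_mset_cong)
    fix u
    assume "u \<in># Vstar x"
    with n have "deg u = n"
      using deg_Vstar by force
    then show "hook_fuel n u = hook u"
      by (simp add: hook_def)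
  qed
  finally show ?thesis .
qed

lemma hook_Node_Cons_expand:
  assumes "\<exists>t\<in>set ts. t \<noteq> Leaf"
  shows "hook (Node a (s # ts)) =
    (\<Sum>i\<leftarrow>[0..<length ts]. \<Sum>u\<in>#Vstar (ts ! i). hook (Node a (s # ts[i := u])))"
  by (subst hook_Vstar)
    (simp_all add: Vstar_Node_Cons[OF assms] sum_mset_image_sum_list image_mset.compositionality
      comp_def)

lemma sum_deg_Vstar_update:
  assumes "i < length ts" and "u \<in># Vstar (ts ! i)"
  shows "(\<Sum>t\<leftarrow>ts. deg t) = Suc (\<Sum>t\<leftarrow>ts[i := u]. deg t)"
  using sum_list_update_add[of i "map deg ts" "deg u"] deg_Vstar[OF assms(2)] assms(1)
  by (simp add: map_update)

lemma prod_fact_deg_Vstar_update: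
  assumes "i < length ts" and "u \<in># Vstar (ts ! i)"
  shows "(\<Prod>t\<leftarrow>ts. fact (deg t)) = deg (ts ! i) * (\<Prod>t\<leftarrow>ts[i := u]. fact (deg t) :: nat)"
proof -
  let ?fs = "map (\<lambda>t. fact (deg t) :: nat) ts"
  have i: "i < length ?fs"
    using assms(1) by simp
  have "(\<Prod>t\<leftarrow>ts. fact (deg t)) =
      prod_list (take i ?fs) * fact (deg (ts ! i)) * prod_list (drop (Suc i) ?fs)"
    using prod_list_update[OF i, of "?fs ! i", unfolded list_update_id] assms(1) by simp
  moreover have "(\<Prod>t\<leftarrow>ts[i := u]. fact (deg t)) =
      prod_list (take i ?fs) * fact (deg u) * prod_list (drop (Suc i) ?fs)"
    using prod_list_update[OF i, of "fact (deg u)"] by (simp add: map_update)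
  ultimately show ?thesis
    using deg_Vstar[OF assms(2)] by (simp add: algebra_simps)
qed

lemma deg_mult_sum_hook_Vstar_update:
  assumes i: "i < length ts"
  shows "deg (ts ! i) * (\<Sum>u\<in>#Vstar (ts ! i). prod_list ((map hook ts)[i := hook u])) =
    deg (ts ! i) * (\<Prod>t\<leftarrow>ts. hook t)"
proof (cases "ts ! i = Leaf")
  case False
  have "(\<Sum>u\<in>#Vstar (ts ! i). prod_list ((map hook ts)[i := hook u])) =
      prod_list ((map hook ts)[i := hook (ts ! i)])"
    using i by (simp add: sum_mset_prod_list_update hook_Vstar[OF False])
  also have "\<dots> = (\<Prod>t\<leftarrow>ts. hook t)"
    by (metis list_update_id map_update)
  finally show ?thesis
    by simp
qed simp

lemma hook_Node_Cons_mult_prod_fact: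
  "hook (Node a (s # ts)) * (\<Prod>t\<leftarrow>ts. fact (deg t)) =
    fact (\<Sum>t\<leftarrow>ts. deg t) * hook s * (\<Prod>t\<leftarrow>ts. hook t)"
proof (induction "\<Sum>t\<leftarrow>ts. deg t" arbitrary: ts)
  case 0
  then have leaves: "\<forall>t\<in>set ts. t = Leaf"
    using sum_deg_eq_0_iff by metis
  then have "(\<Prod>t\<leftarrow>ts. fact (deg t) :: nat) = 1" and "(\<Prod>t\<leftarrow>ts. hook t) = 1"
    by (induction ts) auto
  with leaves show ?case
    unfolding "0"[symmetric] by (simp add: hook_Vstar Vstar_Node_Cons_Leaves)
next
  case (Suc n)
  let ?P = "\<Prod>t\<leftarrow>ts. fact (deg t)" and ?H = "\<Prod>t\<leftarrow>ts. hook t"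
  have nonleaf: "\<exists>t\<in>set ts. t \<noteq> Leaf"
    using Suc.hyps(2) sum_deg_eq_0_iff by (metis nat.distinct(1))
  have summand: "?P * hook (Node a (s # ts[i := u])) =
      deg (ts ! i) * fact n * hook s * prod_list ((map hook ts)[i := hook u])"
    if i: "i < length ts" and u: "u \<in># Vstar (ts ! i)" for i u
  proof -
    have "n = (\<Sum>t\<leftarrow>ts[i := u]. deg t)"
      using sum_deg_Vstar_update[OF i u] Suc.hyps(2) by simp
    with Suc.hyps(1)[OF this] show ?thesis
      by (simp add: prod_fact_deg_Vstar_update[OF i u] map_update mult_ac)
  qed
  have "?P * hook (Node a (s # ts)) =
      (\<Sum>i\<leftarrow>[0..<length ts]. \<Sum>u\<in>#Vstar (ts ! i). ?P * hook (Node a (s # ts[i := u])))"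
    by (simp only: hook_Node_Cons_expand[OF nonleaf] sum_list_const_mult[symmetric]
        sum_mset_distrib_left)
  also have "\<dots> = (\<Sum>i\<leftarrow>[0..<length ts]. deg (ts ! i) * (fact n * hook s * ?H))"
  proof (intro arg_cong[where f = sum_list] map_cong refl)
    fix i
    assume "i \<in> set [0..<length ts]"
    then have i: "i < length ts"
      by simp
    have "(\<Sum>u\<in>#Vstar (ts ! i). ?P * hook (Node a (s # ts[i := u]))) =
        fact n * hook s * (deg (ts ! i) *
          (\<Sum>u\<in>#Vstar (ts ! i). prod_list ((map hook ts)[i := hook u])))"
      by (simp add: summand[OF i] sum_mset_distrib_left mult_ac cong: image_mset_cong)
    also have "\<dots> = deg (ts ! i) * (fact n * hook s * ?H)"
      using deg_mult_sum_hook_Vstar_update[OF i] by simp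
    finally show "(\<Sum>u\<in>#Vstar (ts ! i). ?P * hook (Node a (s # ts[i := u]))) =
        deg (ts ! i) * (fact n * hook s * ?H)" .
  qed
  also have "\<dots> = (\<Sum>t\<leftarrow>ts. deg t) * (fact n * hook s * ?H)"
    by (simp add: sum_list_mult_const sum_list_sum_nth[of "map deg ts"]
        interv_sum_list_conv_sum_set_nat)
  finally show ?case
    using Suc.hyps(2)[symmetric] by (simp add: algebra_simps)
qed

lemma hook_Node_Cons:
  "hook (Node a (s # ts)) =
    fact (\<Sum>t\<leftarrow>ts. deg t) div (\<Prod>t\<leftarrow>ts. fact (deg t)) * hook s * (\<Prod>t\<leftarrow>ts. hook t)"
proof -
  let ?F = "fact (\<Sum>t\<leftarrow>ts. deg t) :: nat" and ?P = "\<Prod>t\<leftarrow>ts. fact (deg t) :: nat"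
    and ?H = "\<Prod>t\<leftarrow>ts. hook t"
  have "?P dvd ?F"
    using prod_fact_dvd_fact_sum_list[of "map deg ts"] by (simp add: comp_def)
  moreover have "?P \<noteq> 0"
    by (auto simp: prod_list_zero_iff)
  ultimately have "?F div ?P * (hook s * ?H) * ?P = ?F * (hook s * ?H)"
    by simp
  also have "\<dots> = hook (Node a (s # ts)) * ?P"
    by (simp add: hook_Node_Cons_mult_prod_fact mult.assoc)
  finally show ?thesis
    using \<open>?P \<noteq> 0\<close> by (simp add: mult.assoc)
qed

theorem proposition2p6:
  fixes G :: "'g set" and ar :: "'g \<Rightarrow> nat" and t :: "'g tree"
  assumes "finite G"
    and "\<forall>a\<in>G. ar a \<ge> 1"
    and "wf_tree G ar t"
  shows "hook t = htilde t"
  using assms(3)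
proof (induction t)
  case (Node a ts)
  \<comment> \<open>Positive arities are essential: V* of a[] is 0, so hook a[] = 0 while htilde a[] = 1.\<close>
  obtain s rest where ts: "ts = s # rest"
    using Node.prems assms(2) by (cases ts) auto
  have IH: "(\<Prod>t\<leftarrow>ts. hook t) = (\<Prod>t\<leftarrow>ts. htilde t)"
    using Node by (intro arg_cong[where f = prod_list] map_cong refl) auto
  have "hook (Node a ts) =
      fact (\<Sum>t\<leftarrow>rest. deg t) div (\<Prod>t\<leftarrow>rest. fact (deg t)) * (\<Prod>t\<leftarrow>ts. hook t)"
    unfolding ts hook_Node_Cons by (simp only: list.map prod_list.Cons mult.assoc)
  also have "\<dots> = htilde (Node a ts)"
    using IH by (simp add: ts)
  finally show ?case .
qed simp

end
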